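(* Let $p\ge 1$ and $c>0$ be constants. For $a>0$ let $x_a:[0,\infty)\to\mathbb{R}$ be the unique solution of $$x'''+c\,x^p\, x''=0,\qquad x(0)=0=x'(0),\quad x''(0)=a,$$ and let $h(a):=\lim_{t\to\infty}x_a'(t)$ (which exists and is finite). Define $$c_2:=\Gamma\!\left(\tfrac{1}{2p+1}\right)\left(\frac{2^p}{c\,(2p+1)^{2p}}\right)^{\frac{1}{2p+1}},\qquad c_3:=\Gamma\!\left(\tfrac{2}{2p+1}\right)(2p+1)^{\frac{1-2p}{2p+1}}\left(\frac{2^p}{c}\right)^{\frac{2}{2p+1}},$$ $$c_1:=\frac{c_3}{c_2}+\frac{\Gamma\big(1/(p+1)\big)}{c^{1/(p+1)}\,\big(c_2(p+1)\big)^{p/(p+1)}}.$$ Then for every $a>0$, $$c_2\, a^{(p+1)/(2p+1)}\le h(a)\le c_1\, a^{(p+1)/(2p+1)}.$$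
   Context: $\Gamma$ denotes the Euler Gamma function. *)

theory Defs
  imports "HOL-Analysis.Analysis"
begin

definition const_c2 :: "real \<Rightarrow> real \<Rightarrow> real" where
  "const_c2 p c = Gamma (1 / (2*p+1)) *
     (2 powr p / (c * (2*p+1) powr (2*p))) powr (1 / (2*p+1))"

definition const_c3 :: "real \<Rightarrow> real \<Rightarrow> real" where
  "const_c3 p c = Gamma (2 / (2*p+1)) * (2*p+1) powr ((1 - 2*p) / (2*p+1)) *
     (2 powr p / c) powr (2 / (2*p+1))"

definition const_c1 :: "real \<Rightarrow> real \<Rightarrow> real" where
  "const_c1 p c = const_c3 p c / const_c2 p c +
     Gamma (1 / (p+1)) / (c powr (1/(p+1)) * (const_c2 p c * (p+1)) powr (p/(p+1)))"

end

theory Submission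
  imports Defs "HOL-Real_Asymp.Real_Asymp"
begin

text \<open>
  The second derivative x'' solves the linear equation y' = - c x^p y, so it stays positive;
  hence x' and x increase, and x'' <= a, x' <= a t, x <= a t^2/2.  The last bound caps the damping
  c x^p by c a^p t^(2p) / 2^p, which forces x''(t) >= a exp (- k t^(2p+1)).  Integrating twice,
  x'(t) is at least a Gamma-type integral converging to s = c2 a^((p+1)/(2p+1)), and
  x(t) >= s (t - T) for an explicit delay T.  Fed back into the damping, this linear bound gives
  x''(t) <= a exp (- m (t - T)^(p+1)) for t >= T, so x' <= a T + a (integral of exp (- m u^(p+1))
  over [0, oo)), again a Gamma integral; this sum is c1 a^((p+1)/(2p+1)).  Being increasing and
  bounded, x' converges.
\<close>

lemma DERIV_comparison:
  fixes f g f' g' :: "real \<Rightarrow> real"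
  assumes "a \<le> b" "continuous_on {a..b} f" "continuous_on {a..b} g"
    and "\<And>t. a < t \<Longrightarrow> t < b \<Longrightarrow> (f has_real_derivative f' t) (at t)"
    and "\<And>t. a < t \<Longrightarrow> t < b \<Longrightarrow> (g has_real_derivative g' t) (at t)"
    and "\<And>t. a < t \<Longrightarrow> t < b \<Longrightarrow> f' t \<le> g' t"
    and "f a \<le> g a"
  shows "f b \<le> g b"
proof -
  have "g a - f a \<le> g b - f b"
  proof (rule DERIV_nonneg_imp_increasing_open[of a b "\<lambda>t. g t - f t"])
    fix t assume "a < t" "t < b"
    then show "\<exists>y. ((\<lambda>t. g t - f t) has_real_derivative y) (at t) \<and> y \<ge> 0"
      using assms(4-6) by (intro exI[of _ "g' t - f' t"]) (auto intro: derivative_intros)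
  qed (use assms in \<open>auto intro: continuous_intros\<close>)
  with assms(7) show ?thesis by simp
qed

lemma integrating_factor_mono:
  fixes y \<phi> \<Phi> \<Phi>' :: "real \<Rightarrow> real"
  assumes "s \<le> t" "continuous_on {s..t} y" "continuous_on {s..t} \<Phi>"
    and "\<And>u. s < u \<Longrightarrow> u < t \<Longrightarrow> (y has_real_derivative - \<phi> u * y u) (at u)"
    and "\<And>u. s < u \<Longrightarrow> u < t \<Longrightarrow> (\<Phi> has_real_derivative \<Phi>' u) (at u)"
    and "\<And>u. s < u \<Longrightarrow> u < t \<Longrightarrow> 0 \<le> y u * (\<Phi>' u - \<phi> u)"
  shows "y s * exp (\<Phi> s) \<le> y t * exp (\<Phi> t)"
proof (rule DERIV_comparison[of s t "\<lambda>_. y s * exp (\<Phi> s)" "\<lambda>u. y u * exp (\<Phi> u)" "\<lambda>_. 0"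
      "\<lambda>u. y u * exp (\<Phi> u) * (\<Phi>' u - \<phi> u)"])
  fix u assume u: "s < u" "u < t"
  show "((\<lambda>u. y u * exp (\<Phi> u)) has_real_derivative y u * exp (\<Phi> u) * (\<Phi>' u - \<phi> u)) (at u)"
    using assms(4,5)[OF u] by (auto intro!: derivative_eq_intros simp: algebra_simps)
  show "0 \<le> y u * exp (\<Phi> u) * (\<Phi>' u - \<phi> u)"
    using mult_nonneg_nonneg[OF assms(6)[OF u] exp_ge_zero[of "\<Phi> u"]] by (simp only: ac_simps)
qed (use assms(1-3) in \<open>auto intro: continuous_intros\<close>)

lemma continuous_on_pos_from_start:
  fixes f :: "real \<Rightarrow> real"
  assumes cont: "continuous_on {a..} f" and start: "f a > 0"
    and step: "\<And>t. a < t \<Longrightarrow> (\<And>s. a \<le> s \<Longrightarrow> s < t \<Longrightarrow> f s > 0) \<Longrightarrow> f t > 0"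
    and "a \<le> t"
  shows "f t > 0"
proof (rule ccontr)
  assume "\<not> f t > 0"
  define S where "S = {a..t} \<inter> f -` {..0}"
  have "closed S"
    unfolding S_def by (intro continuous_closed_preimage continuous_on_subset[OF cont]) auto
  moreover have "t \<in> S" "bdd_below S"
    using \<open>\<not> f t > 0\<close> \<open>a \<le> t\<close> by (auto simp: S_def)
  ultimately have first: "Inf S \<in> S" by (auto intro: closed_contains_Inf)
  have before: "f s > 0" if "a \<le> s" "s < Inf S" for s
    using that cInf_lower[of s S] \<open>bdd_below S\<close> \<open>Inf S \<in> S\<close> by (force simp: S_def)
  have "a < Inf S"
    using first start by (cases "Inf S = a") (auto simp: S_def)
  then have "f (Inf S) > 0" using before by (rule step)
  with first show False by (simp add: S_def)
qed

lemma mono_bdd_tendsto_Sup: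
  fixes f :: "real \<Rightarrow> real"
  assumes mono: "\<And>s t. a \<le> s \<Longrightarrow> s \<le> t \<Longrightarrow> f s \<le> f t"
    and bound: "\<And>t. a \<le> t \<Longrightarrow> f t \<le> B"
  shows "(f \<longlongrightarrow> Sup (f ` {a..})) at_top"
proof (rule increasing_tendsto)
  have bdd: "bdd_above (f ` {a..})" using bound by (auto intro!: bdd_aboveI)
  show "\<forall>\<^sub>F t in at_top. f t \<le> Sup (f ` {a..})"
    using eventually_ge_at_top[of a] by eventually_elim (auto intro!: cSup_upper bdd)
  fix y assume "y < Sup (f ` {a..})"
  then obtain s where s: "a \<le> s" "y < f s"
    using less_cSup_iff[OF _ bdd] by auto
  show "\<forall>\<^sub>F t in at_top. y < f t"
    using eventually_ge_at_top[of s] by eventually_elim (use mono s in force)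
qed

lemma has_integral_tendsto_integral_at_top:
  fixes h :: "real \<Rightarrow> real"
  assumes int: "(h has_integral l) {a..}" and nonneg: "\<And>y. a \<le> y \<Longrightarrow> 0 \<le> h y"
  shows "((\<lambda>y. integral {a..y} h) \<longlongrightarrow> l) at_top"
proof -
  have h_int: "h integrable_on {a..y}" for y
    by (cases "a \<le> y") (auto intro: integrable_on_subinterval[OF has_integral_integrable[OF int]])
  have "integral {a..y} h \<le> integral {a..} h" for y
    using int h_int nonneg by (intro integral_subset_le) (auto simp: has_integral_integrable)
  then have "((\<lambda>y. integral {a..y} h) \<longlongrightarrow> Sup ((\<lambda>y. integral {a..y} h) ` {a..})) at_top"
    using h_int nonneg by (intro mono_bdd_tendsto_Sup integral_subset_le) auto
  moreover from this have "(h has_integral Sup ((\<lambda>y. integral {a..y} h) ` {a..})) {a..}"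
    by (rule has_integral_to_inf[OF h_int _ nonneg])
  ultimately show ?thesis
    using has_integral_unique[OF int] by simp
qed

lemma integral_power_exp_neg_powr_eq:
  fixes m Q t :: real and n :: nat
  assumes m: "m > 0" and Q: "Q > 0" and t: "t > 0"
  defines "z \<equiv> (n + 1) / Q"
  shows "integral {0..t} (\<lambda>u. u ^ n * exp (- m * u powr Q)) =
         integral {0..m * t powr Q} (\<lambda>v. v powr (z - 1) / exp v) / (Q * m powr z)"
proof -
  \<comment> \<open>Substitute u = (v/m)^(1/Q) on [0, m t^Q]; in this direction the integrand that must be
    continuous is u^n exp (- m u^Q), whereas v^(z-1) is unbounded at 0 when z < 1.\<close>
  define f where "f = (\<lambda>u::real. u ^ n * exp (- m * u powr Q))"
  define \<Gamma>\<^sub>z where "\<Gamma>\<^sub>z = (\<lambda>v::real. v powr (z - 1) / exp v)"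
  define b where "b = m * t powr Q"
  define g where "g = (\<lambda>v::real. (v / m) powr (1 / Q))"
  define g' where "g' = (\<lambda>v::real. (1 / Q) * (v / m) powr (1 / Q - 1) / m)"
  have b: "b > 0" using t m by (simp add: b_def)
  have g_ends: "g 0 = 0" "g b = t" using t m Q by (simp_all add: g_def b_def powr_powr)
  have "g v \<le> g b" if "0 \<le> v" "v \<le> b" for v
    unfolding g_def using that m Q by (intro powr_mono2) (auto simp: divide_right_mono)
  then have g_range: "g ` {0..b} \<subseteq> {0..t}"
    using g_ends by (auto simp: g_def)
  have f_cont: "continuous_on {0..t} f"
    unfolding f_def using Q by (intro continuous_intros continuous_on_powr'; auto)
  have g_cont: "continuous_on {0..b} g"
    unfolding g_def using Q m by (intro continuous_on_powr' continuous_intros; auto)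
  have g_deriv: "(g has_field_derivative g' v) (at v within {0..b})" if "v \<in> {0..b} - {0}" for v
  proof -
    have "(g has_field_derivative g' v) (at v)"
      unfolding g_def g'_def using that m by (auto intro!: derivative_eq_intros simp: powr_diff)
    then show ?thesis by (rule has_field_derivative_at_within)
  qed
  have "((\<lambda>v. g' v *\<^sub>R f (g v)) has_integral
      (integral {g 0..g b} f - integral {g b..g 0} f)) {0..b}"
    by (rule has_integral_substitution_general[where s = "{0}", OF _ _ g_range f_cont g_cont g_deriv])
       (use b in auto)
  then have subst: "((\<lambda>v. g' v *\<^sub>R f (g v)) has_integral integral {0..t} f) {0..b}"
    using t by (simp add: g_ends)
  have "g' v *\<^sub>R f (g v) = \<Gamma>\<^sub>z v / (Q * m powr z)" if "v \<in> {0..b} - {0}" for v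
  proof -
    have v: "v > 0" using that by auto
    have z: "1 / Q - 1 + n / Q = z - 1"
      using Q by (simp add: z_def field_simps)
    have "f (g v) = (v / m) powr (n / Q) * exp (- v)"
      using v m Q by (simp add: f_def g_def powr_powr mult.commute flip: powr_realpow)
    then have "g' v *\<^sub>R f (g v) =
        1 / Q * (1 / m) * ((v / m) powr (1 / Q - 1) * (v / m) powr (n / Q)) * exp (- v)"
      by (simp add: g'_def)
    also have "(v / m) powr (1 / Q - 1) * (v / m) powr (n / Q) = (v / m) powr (z - 1)"
      by (simp only: z powr_add[symmetric])
    also have "(v / m) powr (z - 1) = v powr (z - 1) / m powr (z - 1)"
      using v m by (simp add: powr_divide)
    also have "exp (- v) = 1 / exp v"
      by (simp add: exp_minus inverse_eq_divide)
    also have "m powr (z - 1) = m powr z / m"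
      using m by (simp add: powr_diff)
    finally show ?thesis
      using m by (simp add: \<Gamma>\<^sub>z_def)
  qed
  then have "((\<lambda>v. \<Gamma>\<^sub>z v / (Q * m powr z)) has_integral integral {0..t} f) {0..b}"
    by (intro has_integral_spike_finite[where S = "{0}", OF _ _ subst]) auto
  moreover have "((\<lambda>v. \<Gamma>\<^sub>z v / (Q * m powr z)) has_integral integral {0..b} \<Gamma>\<^sub>z / (Q * m powr z)) {0..b}"
  proof -
    have "\<Gamma>\<^sub>z integrable_on {0..b}"
      unfolding \<Gamma>\<^sub>z_def using Q
      by (intro integrable_on_subinterval[OF has_integral_integrable[OF Gamma_integral_real]])
         (auto simp: z_def)
    then show ?thesis by (intro has_integral_divide integrable_integral)
  qed
  ultimately show ?thesis
    by (simp add: f_def \<Gamma>\<^sub>z_def b_def has_integral_unique)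
qed

lemma tendsto_integral_power_exp_neg_powr:
  fixes m Q :: real and n :: nat
  assumes m: "m > 0" and Q: "Q > 0"
  shows "((\<lambda>t. integral {0..t} (\<lambda>u. u ^ n * exp (- m * u powr Q))) \<longlongrightarrow>
            Gamma ((n + 1) / Q) / (Q * m powr ((n + 1) / Q))) at_top"
proof -
  define z where "z = (n + 1) / Q"
  have "((\<lambda>b. integral {0..b} (\<lambda>v. v powr (z - 1) / exp v)) \<longlongrightarrow> Gamma z) at_top"
    using Q by (intro has_integral_tendsto_integral_at_top Gamma_integral_real) (auto simp: z_def)
  then have "((\<lambda>t. integral {0..m * t powr Q} (\<lambda>v. v powr (z - 1) / exp v)) \<longlongrightarrow> Gamma z) at_top"
    by (rule filterlim_compose)
       (rule filterlim_tendsto_pos_mult_at_top[OF tendsto_const m real_powr_at_top[OF Q]])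
  then have "((\<lambda>t. integral {0..m * t powr Q} (\<lambda>v. v powr (z - 1) / exp v) / (Q * m powr z))
      \<longlongrightarrow> Gamma z / (Q * m powr z)) at_top"
    by (rule tendsto_divide[OF _ tendsto_const]) (use m Q in simp)
  then show ?thesis
    unfolding z_def
    by (rule Lim_transform_eventually, use eventually_gt_at_top[of 0] in eventually_elim)
       (rule integral_power_exp_neg_powr_eq[OF m Q, symmetric])
qed

lemma DERIV_powr_shift:
  fixes T r s :: real
  assumes "T < s"
  shows "((\<lambda>u. (u - T) powr r) has_real_derivative r * (s - T) powr (r - 1)) (at s)"
proof -
  have "((\<lambda>u. u powr r) has_real_derivative r * (s - T) powr (r - 1)) (at (s - T))"
    using assms by (intro has_real_derivative_powr) auto
  moreover have "((\<lambda>u. u - T) has_real_derivative 1) (at s)"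
    by (auto intro!: derivative_eq_intros)
  ultimately show ?thesis
    using DERIV_chain2 by fastforce
qed

lemma DERIV_integral_upper:
  fixes f :: "real \<Rightarrow> real"
  assumes "continuous_on {a..} f" "a < t"
  shows "((\<lambda>s. integral {a..s} f) has_real_derivative f t) (at t)"
proof -
  have "((\<lambda>s. integral {a..s} f) has_real_derivative f t) (at t within {a..t+1})"
    using assms by (intro integral_has_real_derivative continuous_on_subset[OF assms(1)]) auto
  then show ?thesis
    using assms(2) by (simp add: at_within_Icc_at)
qed

lemma continuous_on_integral_upper:
  fixes f :: "real \<Rightarrow> real"
  assumes "continuous_on {a..} f"
  shows "continuous_on {a..b} (\<lambda>s. integral {a..s} f)"
  using assms
  by (intro indefinite_integral_continuous_1 integrable_continuous_real)
     (rule continuous_on_subset, auto)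

lemma const_c2_scaling:
  fixes p c a :: real
  assumes p: "p > 0" and c: "c > 0" and a: "a > 0"
  shows "a * (Gamma (1 / (2*p+1)) / ((2*p+1) * (c * a powr p / (2 powr p * (2*p+1))) powr (1 / (2*p+1))))
    = const_c2 p c * a powr ((p+1) / (2*p+1))"
proof -
  define q where "q = 2*p+1"
  define k where "k = c * a powr p / (2 powr p * q)"
  have q: "q > 0" and k: "k > 0" using p c a by (simp_all add: q_def k_def)
  have "ln (a / (q * k powr (1/q))) = ln a - ln q - (1/q) * (ln c + p * ln a - p * ln 2 - ln q)"
    using a c q k by (simp add: k_def ln_mult ln_div ln_powr)
  also have "\<dots> = (1/q) * (p * ln 2 - ln c - 2*p * ln q) + (p+1)/q * ln a"
    using q by (simp add: field_simps) (simp add: q_def algebra_simps)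
  also have "\<dots> = ln ((2 powr p / (c * q powr (2*p))) powr (1/q) * a powr ((p+1)/q))"
    using a q c by (simp add: ln_mult ln_div ln_powr)
  finally have root: "a / (q * k powr (1/q)) = (2 powr p / (c * q powr (2*p))) powr (1/q) * a powr ((p+1)/q)"
    using a q k c by simp
  have "a * (Gamma (1/q) / (q * k powr (1/q))) = Gamma (1/q) * (a / (q * k powr (1/q)))"
    by (simp add: mult.commute)
  also note root
  finally show ?thesis
    by (simp add: const_c2_def q_def k_def mult.assoc)
qed

lemma const_c3_scaling:
  fixes p c a :: real
  assumes p: "p > 0" and c: "c > 0" and a: "a > 0"
  shows "a * (Gamma (2 / (2*p+1)) / ((2*p+1) * (c * a powr p / (2 powr p * (2*p+1))) powr (2 / (2*p+1))))
    = const_c3 p c * a powr (1 / (2*p+1))"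
proof -
  define q where "q = 2*p+1"
  define k where "k = c * a powr p / (2 powr p * q)"
  have q: "q > 0" and k: "k > 0" using p c a by (simp_all add: q_def k_def)
  have "ln (a / (q * k powr (2/q))) = ln a - ln q - (2/q) * (ln c + p * ln a - p * ln 2 - ln q)"
    using a c q k by (simp add: k_def ln_mult ln_div ln_powr)
  also have "\<dots> = (1 - 2*p)/q * ln q + (2/q) * (p * ln 2 - ln c) + (1/q) * ln a"
    using q by (simp add: field_simps) (simp add: q_def algebra_simps)
  also have "\<dots> = ln (q powr ((1 - 2*p)/q) * (2 powr p / c) powr (2/q) * a powr (1/q))"
    using a q c by (simp add: ln_mult ln_div ln_powr)
  finally have root: "a / (q * k powr (2/q)) = q powr ((1 - 2*p)/q) * (2 powr p / c) powr (2/q) * a powr (1/q)"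
    using a q k c by simp
  have "a * (Gamma (2/q) / (q * k powr (2/q))) = Gamma (2/q) * (a / (q * k powr (2/q)))"
    by (simp add: mult.commute)
  also note root
  finally show ?thesis
    by (simp add: const_c3_def q_def k_def mult.assoc)
qed

lemma const_c2_pos: "p > 0 \<Longrightarrow> c > 0 \<Longrightarrow> const_c2 p c > 0"
  by (simp add: const_c2_def Gamma_real_pos)

lemma const_c3_pos: "p > 0 \<Longrightarrow> c > 0 \<Longrightarrow> const_c3 p c > 0"
  by (simp add: const_c3_def Gamma_real_pos)

lemma const_c1_scaling:
  fixes p c a :: real
  assumes p: "p > 0" and c: "c > 0" and a: "a > 0"
  defines "A \<equiv> a powr ((p+1) / (2*p+1))"
  shows "a * (const_c3 p c * a powr (1 / (2*p+1)) / (const_c2 p c * A)) +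
      a * (Gamma (1 / (p+1)) / ((p+1) * (c * (const_c2 p c * A) powr p / (p+1)) powr (1 / (p+1))))
    = const_c1 p c * A"
proof -
  define q where "q = 2*p+1"
  define c2 where "c2 = const_c2 p c"
  define r where "r = 1 / q"
  define s where "s = 1 / (p+1)"
  have q: "q > 0" and c2: "c2 > 0" and A: "A > 0"
    using p c a const_c2_pos[OF p c] by (simp_all add: q_def c2_def A_def)
  have rs: "r * q = 1" "s * (p+1) = 1"
    using q p by (simp_all add: r_def s_def)
  have "a * a powr r = a powr (1 + r)"
    using a by (simp add: powr_add)
  also have "1 + r = (p+1) * r + (p+1) * r"
    using rs by (simp add: q_def algebra_simps)
  also have "a powr ((p+1) * r + (p+1) * r) = A * A"
    unfolding powr_add A_def q_def r_def by simp
  finally have "a * a powr r = A * A" .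
  have delay: "a * (const_c3 p c * a powr r / (c2 * A)) = const_c3 p c / c2 * A"
  proof -
    have "a * (const_c3 p c * a powr r / (c2 * A)) = const_c3 p c * (a * a powr r) / (c2 * A)"
      by (simp add: ac_simps)
    also note \<open>a * a powr r = A * A\<close>
    finally show ?thesis using A c2 by simp
  qed
  define K where "K = c * (c2 * A) powr p / (p+1)"
  have K: "K > 0" using c A c2 p by (simp add: K_def)
  have "ln (a / ((p+1) * K powr s)) = ln a - ln (p+1) - s * (ln c + p * (ln c2 + (p+1) * r * ln a) - ln (p+1))"
    using a p c c2 A K by (simp add: K_def A_def ln_mult ln_div ln_powr q_def r_def s_def)
  also have "\<dots> = (p+1) * r * ln a - s * ln c - p * s * (ln c2 + ln (p+1))"
    using rs unfolding q_def by algebra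
  also have "\<dots> = ln (A / (c powr s * (c2 * (p+1)) powr (p * s)))"
    using a c c2 p A by (simp add: A_def ln_mult ln_div ln_powr q_def r_def s_def)
  finally have root: "a / ((p+1) * K powr s) = A / (c powr s * (c2 * (p+1)) powr (p * s))"
    using a p K A c c2 by simp
  have "a * (Gamma s / ((p+1) * K powr s)) = Gamma s * (a / ((p+1) * K powr s))"
    by (simp add: mult.commute)
  also note root
  finally have tail: "a * (Gamma s / ((p+1) * K powr s)) =
      Gamma s * (A / (c powr s * (c2 * (p+1)) powr (p * s)))" .
  show ?thesis
    using delay tail
    by (simp add: const_c1_def c2_def K_def q_def r_def s_def distrib_right mult.assoc)
qed

locale blasius_type_solution =
  fixes p c a :: real and x x1 x2 :: "real \<Rightarrow> real"
  assumes p_pos: "p > 0" and c_pos: "c > 0" and a_pos: "a > 0"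
    and x_deriv: "\<And>t. t \<ge> 0 \<Longrightarrow> (x has_real_derivative x1 t) (at t within {0..})"
    and x1_deriv: "\<And>t. t \<ge> 0 \<Longrightarrow> (x1 has_real_derivative x2 t) (at t within {0..})"
    and x2_deriv: "\<And>t. t \<ge> 0 \<Longrightarrow>
          (x2 has_real_derivative (- c * (x t) powr p * x2 t)) (at t within {0..})"
    and initial: "x 0 = 0" "x1 0 = 0" "x2 0 = a"
begin

lemma DERIV_solution:
  assumes "t > 0"
  shows "(x has_real_derivative x1 t) (at t)" "(x1 has_real_derivative x2 t) (at t)"
    and "(x2 has_real_derivative - (c * x t powr p) * x2 t) (at t)"
proof -
  have "at t within {0..} = at t"
    using assms by (intro at_within_interior) (simp add: interior_real_atLeast)
  then show "(x has_real_derivative x1 t) (at t)" "(x1 has_real_derivative x2 t) (at t)"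
    and "(x2 has_real_derivative - (c * x t powr p) * x2 t) (at t)"
    using x_deriv[of t] x1_deriv[of t] x2_deriv[of t] assms by simp_all
qed

lemma continuous_on_solution:
  assumes "S \<subseteq> {0..}"
  shows "continuous_on S x" "continuous_on S x1" "continuous_on S x2"
proof -
  have "continuous_on {0..} x" "continuous_on {0..} x1" "continuous_on {0..} x2"
    using DERIV_continuous[OF x_deriv] DERIV_continuous[OF x1_deriv] DERIV_continuous[OF x2_deriv]
    by (auto simp: continuous_on_eq_continuous_within)
  then show "continuous_on S x" "continuous_on S x1" "continuous_on S x2"
    using assms by (auto intro: continuous_on_subset)
qed

lemma mono_while_x2_pos:
  assumes pos: "\<And>s. 0 \<le> s \<Longrightarrow> s < b \<Longrightarrow> x2 s > 0" and st: "0 \<le> s" "s \<le> t" "t \<le> b"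
  shows "x1 s \<le> x1 t" "x s \<le> x t" "0 \<le> x s"
proof -
  have x1_mono: "x1 u \<le> x1 v" if "0 \<le> u" "u \<le> v" "v \<le> b" for u v
  proof (rule DERIV_comparison[of u v "\<lambda>_. x1 u" x1 "\<lambda>_. 0" x2])
    fix r assume "u < r" "r < v"
    then show "(x1 has_real_derivative x2 r) (at r)" "0 \<le> x2 r"
      using that DERIV_solution(2)[of r] pos[of r] by auto
  qed (use that in \<open>auto intro: continuous_on_solution\<close>)
  have x1_nonneg: "0 \<le> x1 u" if "0 \<le> u" "u \<le> b" for u
    using x1_mono[of 0 u] that initial by simp
  have x_mono: "x u \<le> x v" if "0 \<le> u" "u \<le> v" "v \<le> b" for u v
  proof (rule DERIV_comparison[of u v "\<lambda>_. x u" x "\<lambda>_. 0" x1])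
    fix r assume "u < r" "r < v"
    then show "(x has_real_derivative x1 r) (at r)" "0 \<le> x1 r"
      using that DERIV_solution(1)[of r] x1_nonneg[of r] by auto
  qed (use that in \<open>auto intro: continuous_on_solution\<close>)
  show "x1 s \<le> x1 t" "x s \<le> x t" "0 \<le> x s"
    using x1_mono[OF st] x_mono[OF st] x_mono[of 0 s] st initial by auto
qed

lemma x2_pos:
  assumes "t \<ge> 0"
  shows "x2 t > 0"
proof (rule continuous_on_pos_from_start[OF continuous_on_solution(3)[OF order_refl] _ _ assms])
  fix t0 assume t0: "0 < t0" and pos: "\<And>s. 0 \<le> s \<Longrightarrow> s < t0 \<Longrightarrow> x2 s > 0"
  \<comment> \<open>While x2 > 0, x increases, so the damping c x^p on [0, t0] is at most its value M at t0.\<close>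
  define M where "M = c * x t0 powr p"
  have "x2 0 * exp (M * 0) \<le> x2 t0 * exp (M * t0)"
  proof (rule integrating_factor_mono[where y = x2 and \<Phi> = "\<lambda>u. M * u" and s = 0 and t = t0
        and \<phi> = "\<lambda>u. c * x u powr p" and \<Phi>' = "\<lambda>_. M"])
    fix u assume u: "0 < u" "u < t0"
    have "0 \<le> x u" "x u \<le> x t0"
      using mono_while_x2_pos(2,3)[where b = t0 and s = u and t = t0, OF pos] u by auto
    then have "x u powr p \<le> x t0 powr p"
      using p_pos by (intro powr_mono2) auto
    then show "0 \<le> x2 u * (M - c * x u powr p)"
      using pos[of u] u c_pos by (simp add: M_def)
    show "(x2 has_real_derivative - (c * x u powr p) * x2 u) (at u)"
      by (rule DERIV_solution(3)[OF u(1)])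
    show "((\<lambda>u. M * u) has_real_derivative M) (at u)"
      by (rule DERIV_cmult_Id)
  qed (use t0 in \<open>auto intro: continuous_on_solution continuous_intros\<close>)
  then have "0 < x2 t0 * exp (M * t0)"
    using initial a_pos by simp
  then show "x2 t0 > 0"
    by (simp add: zero_less_mult_iff)
qed (use initial a_pos in auto)

lemma x1_mono: "0 \<le> s \<Longrightarrow> s \<le> t \<Longrightarrow> x1 s \<le> x1 t"
  and x_nonneg: "0 \<le> t \<Longrightarrow> 0 \<le> x t"
  using mono_while_x2_pos[where b = t and s = s and t = t]
    mono_while_x2_pos[where b = t and s = t and t = t] x2_pos
  by auto

lemma x2_le: "0 \<le> t \<Longrightarrow> x2 t \<le> a"
proof (rule DERIV_comparison[of 0 t x2 "\<lambda>_. a" "\<lambda>u. - (c * x u powr p) * x2 u" "\<lambda>_. 0"])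
  fix u assume u: "0 < u" "u < t"
  show "(x2 has_real_derivative - (c * x u powr p) * x2 u) (at u)"
    by (rule DERIV_solution(3)[OF u(1)])
  show "- (c * x u powr p) * x2 u \<le> 0"
    using x2_pos[of u] u c_pos by simp
qed (auto intro: continuous_on_solution simp: initial)

lemma x1_le: "0 \<le> t \<Longrightarrow> x1 t \<le> a * t"
proof (rule DERIV_comparison[of 0 t x1 "\<lambda>s. a * s" x2 "\<lambda>_. a"])
  fix u assume u: "0 < u" "u < t"
  show "(x1 has_real_derivative x2 u) (at u)"
    by (rule DERIV_solution(2)[OF u(1)])
  show "((\<lambda>s. a * s) has_real_derivative a) (at u)"
    by (rule DERIV_cmult_Id)
  show "x2 u \<le> a"
    using x2_le u by simp
qed (auto intro!: continuous_intros intro: continuous_on_solution simp: initial)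

lemma x_le: "0 \<le> t \<Longrightarrow> x t \<le> a * t\<^sup>2 / 2"
proof (rule DERIV_comparison[of 0 t x "\<lambda>s. a * s\<^sup>2 / 2" x1 "\<lambda>s. a * s"])
  fix u assume u: "0 < u" "u < t"
  show "(x has_real_derivative x1 u) (at u)"
    by (rule DERIV_solution(1)[OF u(1)])
  show "((\<lambda>s. a * s\<^sup>2 / 2) has_real_derivative a * u) (at u)"
    by (auto intro!: derivative_eq_intros)
  show "x1 u \<le> a * u"
    using x1_le u by simp
qed (auto intro!: continuous_intros intro: continuous_on_solution simp: initial)

definition lower_rate :: real
  where "lower_rate = c * a powr p / (2 powr p * (2*p+1))"

definition lower_x2 :: "real \<Rightarrow> real"
  where "lower_x2 u = a * exp (- lower_rate * u powr (2*p+1))"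

lemma lower_rate_pos: "lower_rate > 0"
  using c_pos a_pos p_pos by (simp add: lower_rate_def)

lemma continuous_on_lower_x2: "S \<subseteq> {0..} \<Longrightarrow> continuous_on S lower_x2"
  unfolding lower_x2_def using p_pos
  by (intro continuous_intros continuous_on_powr') auto

lemma damping_le_lower_rate: "0 < u \<Longrightarrow> c * x u powr p \<le> lower_rate * ((2*p+1) * u powr (2*p))"
proof -
  assume u: "0 < u"
  have "x u powr p \<le> (a * u\<^sup>2 / 2) powr p"
    using x_le[of u] x_nonneg[of u] u p_pos by (intro powr_mono2) auto
  also have "\<dots> = a powr p * u powr (2*p) / 2 powr p"
  proof -
    have "(u\<^sup>2) powr p = u powr (2*p)"
      using u powr_powr[of u 2 p] powr_realpow[of u 2] by simp
    then show ?thesis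
      using u a_pos by (simp add: powr_mult powr_divide)
  qed
  also have "\<dots> = lower_rate * ((2*p+1) * u powr (2*p)) / c"
    using c_pos p_pos by (simp add: lower_rate_def)
  finally show ?thesis
    using c_pos by (simp add: field_simps)
qed

lemma lower_x2_le_x2: "0 \<le> t \<Longrightarrow> lower_x2 t \<le> x2 t"
proof -
  assume t: "0 \<le> t"
  define q where "q = 2*p+1"
  have "x2 0 * exp (lower_rate * 0 powr q) \<le> x2 t * exp (lower_rate * t powr q)"
  proof (rule integrating_factor_mono[where y = x2 and \<Phi> = "\<lambda>u. lower_rate * u powr q"
        and \<phi> = "\<lambda>u. c * x u powr p" and \<Phi>' = "\<lambda>u. lower_rate * (q * u powr (q - 1))"])
    fix u assume u: "0 < u" "u < t"
    show "(x2 has_real_derivative - (c * x u powr p) * x2 u) (at u)"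
      by (rule DERIV_solution(3)[OF u(1)])
    show "((\<lambda>u. lower_rate * u powr q) has_real_derivative lower_rate * (q * u powr (q - 1))) (at u)"
      using DERIV_powr_shift[of 0 u q] u by (auto intro: DERIV_cmult)
    show "0 \<le> x2 u * (lower_rate * (q * u powr (q - 1)) - c * x u powr p)"
      using damping_le_lower_rate[OF u(1)] x2_pos[of u] u by (simp add: q_def)
  next
    show "continuous_on {0..t} (\<lambda>u. lower_rate * u powr q)"
      using p_pos by (intro continuous_intros continuous_on_powr') (auto simp: q_def)
  qed (use t in \<open>auto intro: continuous_on_solution\<close>)
  then have "a \<le> x2 t * exp (lower_rate * t powr q)"
    using p_pos by (simp add: initial q_def)
  then have "lower_x2 t \<le> x2 t * exp (lower_rate * t powr q) * exp (- lower_rate * t powr q)"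
    unfolding lower_x2_def q_def by (rule mult_right_mono) simp
  also have "\<dots> = x2 t"
    by (simp add: mult.assoc flip: exp_add)
  finally show ?thesis .
qed

definition lower_x1 :: "real \<Rightarrow> real"
  where "lower_x1 t = integral {0..t} lower_x2"

definition lower_moment :: "real \<Rightarrow> real"
  where "lower_moment t = integral {0..t} (\<lambda>u. u * lower_x2 u)"

lemma lower_x1_0 [simp]: "lower_x1 0 = 0"
  and lower_moment_0 [simp]: "lower_moment 0 = 0"
  by (simp_all add: lower_x1_def lower_moment_def)

lemma DERIV_lower_x1: "0 < t \<Longrightarrow> (lower_x1 has_real_derivative lower_x2 t) (at t)"
  unfolding lower_x1_def by (rule DERIV_integral_upper[OF continuous_on_lower_x2]) auto

lemma DERIV_lower_moment: "0 < t \<Longrightarrow> (lower_moment has_real_derivative t * lower_x2 t) (at t)"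
  unfolding lower_moment_def
  by (rule DERIV_integral_upper[where f = "\<lambda>u. u * lower_x2 u"])
     (auto intro!: continuous_intros continuous_on_lower_x2)

lemma continuous_on_lower_x1: "continuous_on {0..t} lower_x1"
  and continuous_on_lower_moment: "continuous_on {0..t} lower_moment"
  unfolding lower_x1_def lower_moment_def
  by (auto intro!: continuous_on_integral_upper continuous_intros continuous_on_lower_x2)

lemma lower_x1_le_x1: "0 \<le> t \<Longrightarrow> lower_x1 t \<le> x1 t"
proof (rule DERIV_comparison[of 0 t lower_x1 x1 lower_x2 x2])
  fix u assume u: "0 < u" "u < t"
  show "(lower_x1 has_real_derivative lower_x2 u) (at u)" "(x1 has_real_derivative x2 u) (at u)"
    using DERIV_lower_x1 DERIV_solution(2) u by auto
  show "lower_x2 u \<le> x2 u"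
    using lower_x2_le_x2 u by simp
qed (auto intro: continuous_on_solution continuous_on_lower_x1 simp: initial)

lemma lower_x_le_x: "0 \<le> t \<Longrightarrow> t * lower_x1 t - lower_moment t \<le> x t"
proof (rule DERIV_comparison[of 0 t "\<lambda>s. s * lower_x1 s - lower_moment s" x lower_x1 x1])
  fix u assume u: "0 < u" "u < t"
  show "((\<lambda>s. s * lower_x1 s - lower_moment s) has_real_derivative lower_x1 u) (at u)"
    using u by (auto intro!: derivative_eq_intros DERIV_lower_x1 DERIV_lower_moment)
  show "(x has_real_derivative x1 u) (at u)"
    by (rule DERIV_solution(1)[OF u(1)])
  show "lower_x1 u \<le> x1 u"
    using lower_x1_le_x1 u by simp
qed (auto intro!: continuous_intros intro: continuous_on_solution continuous_on_lower_x1
      continuous_on_lower_moment simp: initial)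

definition slope :: real
  where "slope = const_c2 p c * a powr ((p+1) / (2*p+1))"

definition delay :: real
  where "delay = const_c3 p c * a powr (1 / (2*p+1)) / slope"

lemma slope_pos: "slope > 0"
  using const_c2_pos[OF p_pos c_pos] a_pos by (simp add: slope_def)

lemma delay_pos: "delay > 0"
  using const_c3_pos[OF p_pos c_pos] a_pos slope_pos by (simp add: delay_def)

lemma lower_x1_tendsto: "(lower_x1 \<longlongrightarrow> slope) at_top"
proof -
  have "((\<lambda>t. integral {0..t} (\<lambda>u. exp (- lower_rate * u powr (2*p+1)))) \<longlongrightarrow>
      Gamma (1 / (2*p+1)) / ((2*p+1) * lower_rate powr (1 / (2*p+1)))) at_top"
    using tendsto_integral_power_exp_neg_powr[OF lower_rate_pos, of "2*p+1" 0] p_pos by simp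
  from tendsto_mult_left[OF this, of a] show ?thesis
    using const_c2_scaling[OF p_pos c_pos a_pos]
    by (simp add: lower_x1_def[abs_def] lower_x2_def[abs_def] lower_rate_def slope_def)
qed

lemma lower_moment_tendsto: "(lower_moment \<longlongrightarrow> slope * delay) at_top"
proof -
  have lim: "((\<lambda>t. integral {0..t} (\<lambda>u. u * exp (- lower_rate * u powr (2*p+1)))) \<longlongrightarrow>
      Gamma (2 / (2*p+1)) / ((2*p+1) * lower_rate powr (2 / (2*p+1)))) at_top"
    using tendsto_integral_power_exp_neg_powr[OF lower_rate_pos, of "2*p+1" 1] p_pos by simp
  have eq: "a * integral {0..t} (\<lambda>u. u * exp (- lower_rate * u powr (2*p+1))) = lower_moment t" for t
  proof -
    have "integral {0..t} (\<lambda>u. u * lower_x2 u) =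
        integral {0..t} (\<lambda>u. a * (u * exp (- lower_rate * u powr (2*p+1))))"
      by (rule integral_cong) (simp add: lower_x2_def)
    then show ?thesis
      by (simp add: lower_moment_def)
  qed
  from tendsto_mult_left[OF lim, of a]
  have "(lower_moment \<longlongrightarrow> a * (Gamma (2 / (2*p+1)) / ((2*p+1) * lower_rate powr (2 / (2*p+1))))) at_top"
    by (simp only: eq)
  then show ?thesis
    using const_c3_scaling[OF p_pos c_pos a_pos] slope_pos by (simp add: lower_rate_def delay_def)
qed

lemma slope_delay_le_x: "0 \<le> t \<Longrightarrow> slope * (t - delay) \<le> x t"
proof -
  assume t: "0 \<le> t"
  have "lower_moment t - t * lower_x1 t \<le> lower_moment s - t * lower_x1 s" if "t \<le> s" for s
  proof (rule DERIV_comparison[of t s "\<lambda>_. lower_moment t - t * lower_x1 t"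
        "\<lambda>s. lower_moment s - t * lower_x1 s" "\<lambda>_. 0" "\<lambda>u. u * lower_x2 u - t * lower_x2 u"])
    fix u assume u: "t < u" "u < s"
    show "((\<lambda>s. lower_moment s - t * lower_x1 s) has_real_derivative u * lower_x2 u - t * lower_x2 u) (at u)"
      using u t by (auto intro!: derivative_eq_intros DERIV_lower_x1 DERIV_lower_moment)
    have "0 \<le> lower_x2 u"
      using a_pos by (simp add: lower_x2_def)
    then show "0 \<le> u * lower_x2 u - t * lower_x2 u"
      using u by (simp add: mult_right_mono flip: left_diff_distrib)
  qed (use that t in \<open>auto intro!: continuous_intros intro: continuous_on_subset[OF continuous_on_lower_x1]
         continuous_on_subset[OF continuous_on_lower_moment]\<close>)
  then have "lower_moment t - t * lower_x1 t \<le> slope * delay - t * slope"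
    by (intro tendsto_lowerbound[OF tendsto_diff[OF lower_moment_tendsto tendsto_mult[OF tendsto_const lower_x1_tendsto]]])
       (auto intro: eventually_mono[OF eventually_ge_at_top[of t]])
  then show ?thesis
    using lower_x_le_x[OF t] by (simp add: algebra_simps)
qed

definition upper_rate :: real
  where "upper_rate = c * slope powr p / (p+1)"

definition upper_profile :: "real \<Rightarrow> real"
  where "upper_profile u = exp (- upper_rate * u powr (p+1))"

lemma upper_rate_pos: "upper_rate > 0"
  using c_pos slope_pos p_pos by (simp add: upper_rate_def)

lemma continuous_on_upper_profile: "S \<subseteq> {0..} \<Longrightarrow> continuous_on S upper_profile"
  unfolding upper_profile_def using p_pos
  by (intro continuous_intros continuous_on_powr') auto

lemma x2_le_upper_profile: "delay \<le> t \<Longrightarrow> x2 t \<le> a * upper_profile (t - delay)"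
proof -
  assume t: "delay \<le> t"
  define \<Phi> where "\<Phi> u = upper_rate * (u - delay) powr (p+1)" for u
  \<comment> \<open>Here \<Phi>' is at most the damping, so the integrating factor is applied to - x2.\<close>
  have "- x2 delay * exp (\<Phi> delay) \<le> - x2 t * exp (\<Phi> t)"
  proof (rule integrating_factor_mono[where y = "\<lambda>u. - x2 u" and \<Phi> = \<Phi>
        and \<phi> = "\<lambda>u. c * x u powr p" and \<Phi>' = "\<lambda>u. upper_rate * ((p+1) * (u - delay) powr (p + 1 - 1))"])
    fix u assume u: "delay < u" "u < t"
    then have "0 < u" using delay_pos by simp
    show "((\<lambda>u. - x2 u) has_real_derivative - (c * x u powr p) * - x2 u) (at u)"
      using DERIV_minus[OF DERIV_solution(3)[OF \<open>0 < u\<close>]] by simp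
    show "(\<Phi> has_real_derivative upper_rate * ((p+1) * (u - delay) powr (p + 1 - 1))) (at u)"
      unfolding \<Phi>_def using DERIV_powr_shift[OF u(1)] by (rule DERIV_cmult)
    have "(slope * (u - delay)) powr p \<le> x u powr p"
      using slope_delay_le_x[of u] \<open>0 < u\<close> u slope_pos p_pos by (intro powr_mono2) auto
    then have "upper_rate * ((p+1) * (u - delay) powr (p + 1 - 1)) \<le> c * x u powr p"
      using u slope_pos p_pos c_pos by (simp add: upper_rate_def powr_mult)
    then show "0 \<le> - x2 u * (upper_rate * ((p+1) * (u - delay) powr (p + 1 - 1)) - c * x u powr p)"
      using x2_pos[of u] \<open>0 < u\<close> by (simp add: mult_le_0_iff)
  next
    show "continuous_on {delay..t} \<Phi>"
      unfolding \<Phi>_def using p_pos by (intro continuous_intros continuous_on_powr') auto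
  qed (use t delay_pos in \<open>auto intro!: continuous_intros intro: continuous_on_solution\<close>)
  then have "x2 t * exp (\<Phi> t) \<le> a"
    using x2_le[of delay] delay_pos p_pos by (simp add: \<Phi>_def)
  then have "x2 t * exp (\<Phi> t) * exp (- \<Phi> t) \<le> a * exp (- \<Phi> t)"
    by (rule mult_right_mono) simp
  then show ?thesis
    by (simp add: upper_profile_def \<Phi>_def mult.assoc flip: exp_add)
qed

definition upper_tail :: real
  where "upper_tail = Gamma (1 / (p+1)) / ((p+1) * upper_rate powr (1 / (p+1)))"

lemma integral_upper_profile_le: "integral {0..s} upper_profile \<le> upper_tail"
proof -
  have lim: "((\<lambda>t. integral {0..t} upper_profile) \<longlongrightarrow> upper_tail) at_top"
    using tendsto_integral_power_exp_neg_powr[OF upper_rate_pos, of "p+1" 0] p_pos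
    by (simp add: upper_profile_def[abs_def] upper_tail_def)
  have "integral {0..s} upper_profile \<le> integral {0..t} upper_profile" if "s \<le> t" for t
    using that by (intro integral_subset_le integrable_continuous_real continuous_on_upper_profile)
       (auto simp: upper_profile_def)
  then show ?thesis
    by (intro tendsto_lowerbound[OF lim]) (auto intro: eventually_mono[OF eventually_ge_at_top[of s]])
qed

lemma x1_le_upper: "0 \<le> t \<Longrightarrow> x1 t \<le> a * delay + a * upper_tail"
proof -
  assume t: "0 \<le> t"
  have "0 \<le> upper_tail"
    using integral_upper_profile_le[of 0] by simp
  consider "t \<le> delay" | "delay < t" by linarith
  then show ?thesis
  proof cases
    case 1
    have "x1 t \<le> a * t"
      by (rule x1_le[OF t])
    also have "\<dots> \<le> a * delay"
      using 1 a_pos by simp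
    also have "\<dots> \<le> a * delay + a * upper_tail"
      using \<open>0 \<le> upper_tail\<close> a_pos by simp
    finally show ?thesis .
  next
    case 2
    define F where "F u = integral {0..u} upper_profile" for u
    have "x1 t \<le> x1 delay + a * F (t - delay)"
    proof (rule DERIV_comparison[of delay t x1 "\<lambda>u. x1 delay + a * F (u - delay)" x2
          "\<lambda>u. a * upper_profile (u - delay)"])
      fix u assume u: "delay < u" "u < t"
      show "(x1 has_real_derivative x2 u) (at u)"
        using u delay_pos by (intro DERIV_solution) simp
      have "(F has_real_derivative upper_profile (u - delay)) (at (u - delay))"
        unfolding F_def using u by (intro DERIV_integral_upper continuous_on_upper_profile) auto
      moreover have "((\<lambda>u. u - delay) has_real_derivative 1) (at u)"
        by (auto intro!: derivative_eq_intros)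
      ultimately have "((\<lambda>u. F (u - delay)) has_real_derivative upper_profile (u - delay) * 1) (at u)"
        by (rule DERIV_chain2[where g = "\<lambda>u. u - delay"])
      then show "((\<lambda>u. x1 delay + a * F (u - delay)) has_real_derivative a * upper_profile (u - delay)) (at u)"
        by (auto intro!: derivative_eq_intros)
      show "x2 u \<le> a * upper_profile (u - delay)"
        using x2_le_upper_profile u by simp
    next
      have "continuous_on {0..t - delay} F"
        unfolding F_def by (intro continuous_on_integral_upper continuous_on_upper_profile) auto
      then have "continuous_on {delay..t} (\<lambda>u. F (u - delay))"
        by (rule continuous_on_compose2) (auto intro!: continuous_intros)
      then show "continuous_on {delay..t} (\<lambda>u. x1 delay + a * F (u - delay))"
        by (intro continuous_intros)
    qed (use 2 delay_pos in \<open>auto intro: continuous_on_solution simp: F_def\<close>)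
    also have "\<dots> \<le> a * delay + a * upper_tail"
      using x1_le[of delay] delay_pos a_pos integral_upper_profile_le[of "t - delay"]
      by (intro add_mono mult_left_mono) (auto simp: F_def)
    finally show ?thesis .
  qed
qed

lemma x1_limit_bounds:
  "\<exists>h. (x1 \<longlongrightarrow> h) at_top \<and> slope \<le> h \<and> h \<le> const_c1 p c * a powr ((p+1) / (2*p+1))"
proof -
  have lim: "(x1 \<longlongrightarrow> Sup (x1 ` {0..})) at_top"
    by (rule mono_bdd_tendsto_Sup[OF x1_mono x1_le_upper])
  have "slope \<le> Sup (x1 ` {0..})"
    using lower_x1_le_x1
    by (intro tendsto_le[OF _ lim lower_x1_tendsto]) (auto intro: eventually_mono[OF eventually_ge_at_top[of 0]])
  moreover have "Sup (x1 ` {0..}) \<le> a * delay + a * upper_tail"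
    using x1_le_upper
    by (intro tendsto_upperbound[OF lim]) (auto intro: eventually_mono[OF eventually_ge_at_top[of 0]])
  moreover have "a * delay + a * upper_tail = const_c1 p c * a powr ((p+1) / (2*p+1))"
    using const_c1_scaling[OF p_pos c_pos a_pos]
    by (simp add: delay_def slope_def upper_tail_def upper_rate_def)
  ultimately show ?thesis
    using lim by auto
qed

end

theorem lemma4:
  fixes p c a :: real and x x1 x2 :: "real \<Rightarrow> real"
  assumes hp: "p \<ge> 1" and hc: "c > 0" and ha: "a > 0"
    and d0: "\<And>t. t \<ge> 0 \<Longrightarrow> (x has_real_derivative x1 t) (at t within {0..})"
    and d1: "\<And>t. t \<ge> 0 \<Longrightarrow> (x1 has_real_derivative x2 t) (at t within {0..})"
    and d2: "\<And>t. t \<ge> 0 \<Longrightarrow>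
               (x2 has_real_derivative (- c * (x t) powr p * x2 t)) (at t within {0..})"
    and init: "x 0 = 0" "x1 0 = 0" "x2 0 = a"
  shows "\<exists>h. (x1 \<longlongrightarrow> h) at_top \<and>
             const_c2 p c * a powr ((p+1)/(2*p+1)) \<le> h \<and>
             h \<le> const_c1 p c * a powr ((p+1)/(2*p+1))"
proof -
  interpret blasius_type_solution p c a x x1 x2
    using hp hc ha d0 d1 d2 init by unfold_locales auto
  show ?thesis
    using x1_limit_bounds by (simp add: slope_def)
qed

end
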